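(* For an integer $n\ge 2$, $\Phi(n)=\Lambda(n)$ if and only if $n=2$ or $n=p^r$ for some odd prime $p$ and some integer $r>0$.
   Context: For a positive integer $n$, let $\mathcal{G}_n=\{a+bi\in\mathbb{Z}[i]/n\mathbb{Z}[i] : a^2+b^2\equiv 1 \pmod n\}$ (a multiplicative group). Define $\Phi(n)=|\mathcal{G}_n|$ and $\Lambda(n)$ to be the exponent of the group $\mathcal{G}_n$. *)

theory Defs
  imports "HOL-Algebra.Group" "HOL-Number_Theory.Number_Theory"
begin

text \<open>Elements a + b i of Z[i]/nZ[i] are represented by pairs (a,b) of canonical
  residues 0 \<le> a, b < n.\<close>

definition gauss_mult :: "nat \<Rightarrow> int \<times> int \<Rightarrow> int \<times> int \<Rightarrow> int \<times> int" where
  "gauss_mult n x y = ((fst x * fst y - snd x * snd y) mod int n,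
                       (fst x * snd y + snd x * fst y) mod int n)"

definition G :: "nat \<Rightarrow> (int \<times> int) monoid" where
  "G n = \<lparr> carrier = {(a, b). 0 \<le> a \<and> a < int n \<and> 0 \<le> b \<and> b < int n \<and>
                               [a^2 + b^2 = 1] (mod int n)},
           mult = gauss_mult n,
           one = (1 mod int n, 0) \<rparr>"

definition Phi :: "nat \<Rightarrow> nat" where
  "Phi n = card (carrier (G n))"

definition Lambda :: "nat \<Rightarrow> nat" where
  "Lambda n = (LEAST k. 0 < k \<and> (\<forall>x \<in> carrier (G n). x [^]\<^bsub>G n\<^esub> k = \<one>\<^bsub>G n\<^esub>))"

end

theory Submission
  imports Defs "HOL-Algebra.Multiplicative_Group"
begin

text \<open>If \<open>h\<^sup>2 = 1\<close> has at least four solutions, the squaring map is at least 4-to-1, so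
  every \<open>x\<close> satisfies \<open>x\<^bsup>2|G\<^sup>2|\<^esup> = 1\<close> with \<open>2|G\<^sup>2| < |G|\<close>. Such solutions exist when
  \<open>n = 2k\<close> with \<open>k \<ge> 2\<close> (namely \<open>\<plusminus>1, k \<plusminus> 1 + k i\<close>) and, by the Chinese remainder theorem,
  when \<open>n = ab\<close> with coprime \<open>a, b \<ge> 3\<close>. Conversely, for \<open>n = p\<^sup>r\<close> with \<open>p\<close> an odd prime,
  every equation \<open>x\<^sup>d = 1\<close> has at most \<open>d\<close> solutions in \<open>G n\<close>, which forces \<open>\<Lambda> n \<ge> \<Phi> n\<close>.
  Writing \<open>d = p\<^sup>s m\<close> with \<open>p \<nmid> m\<close>: the Frobenius congruence \<open>z\<^sup>p \<equiv> z\<close> or \<open>z\<^sup>p \<equiv> gconj z\<close> (mod \<open>p\<close>)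
  shows that \<open>p\<close>-power torsion is \<open>\<equiv> 1 (mod p)\<close>, and the binomial lifting
  \<open>(1 + p\<^sup>j u)\<^sup>p \<equiv> 1 + p\<^bsup>j+1\<^esup> u (mod p\<^bsup>j+2\<^esup>)\<close> bounds it by \<open>p\<^sup>s\<close>; the \<open>m\<close>-torsion
  injects into \<open>G p\<close>, which embeds into \<open>\<int>/p\<close> via \<open>i \<mapsto> \<surd>-1\<close> when \<open>p \<equiv> 1 (mod 4)\<close> and
  into the field \<open>\<int>[i]/p\<close> when \<open>p \<equiv> 3 (mod 4)\<close>, where polynomials have few roots.\<close>

lemma cong_of_diff_eq_mult: "x - y = n * t \<Longrightarrow> [x = y] (mod n)" for x y n t :: int
  by (simp add: cong_iff_dvd_diff)

lemma not_cong_one_minus_one: "2 < m \<Longrightarrow> \<not> [1 = -1] (mod m)" for m :: int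
  by (auto simp: cong_iff_dvd_diff dest: zdvd_imp_le)

lemma odd_prime_ge_3: "prime p \<Longrightarrow> odd p \<Longrightarrow> p \<ge> 3" for p :: nat
  using prime_ge_2_nat[of p] by (cases "p = 2") auto

lemma odd_prime_not_dvd_two: "prime p \<Longrightarrow> odd p \<Longrightarrow> \<not> int p dvd 2"
  using odd_prime_ge_3[of p] by (auto dest: zdvd_imp_le)

lemma prime_power_ge_2: "prime p \<Longrightarrow> r > 0 \<Longrightarrow> p ^ r \<ge> 2" for p :: nat
  using self_le_power[of p r] prime_ge_2_nat[of p] by simp

section \<open>The exponent of a finite group\<close>

definition exponent :: "('a, 'b) monoid_scheme \<Rightarrow> nat" where
  "exponent M = (LEAST k. 0 < k \<and> (\<forall>x \<in> carrier M. x [^]\<^bsub>M\<^esub> k = \<one>\<^bsub>M\<^esub>))"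

context group
begin

lemma exponent_le:
  assumes "0 < k" and "\<And>x. x \<in> carrier G \<Longrightarrow> x [^] k = \<one>"
  shows "exponent G \<le> k"
  unfolding exponent_def by (rule Least_le) (use assms in auto)

lemma
  assumes "finite (carrier G)"
  shows exponent_pos: "0 < exponent G"
    and pow_exponent_eq_one: "x \<in> carrier G \<Longrightarrow> x [^] exponent G = \<one>"
    and exponent_le_order: "exponent G \<le> order G"
proof -
  have order: "0 < order G \<and> (\<forall>x\<in>carrier G. x [^] order G = \<one>)"
    using assms pow_order_eq_1 by (simp add: order_gt_0_iff_finite)
  then have "0 < exponent G \<and> (\<forall>x\<in>carrier G. x [^] exponent G = \<one>)"
    unfolding exponent_def by (rule LeastI)
  then show "0 < exponent G" "x \<in> carrier G \<Longrightarrow> x [^] exponent G = \<one>" by auto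
  show "exponent G \<le> order G"
    using order by (intro exponent_le) auto
qed

lemma exponent_eq_order_if_card_roots_le:
  assumes fin: "finite (carrier G)"
    and roots: "\<And>d. 0 < d \<Longrightarrow> card {x \<in> carrier G. x [^] d = \<one>} \<le> d"
  shows "exponent G = order G"
proof -
  have "{x \<in> carrier G. x [^] exponent G = \<one>} = carrier G"
    using pow_exponent_eq_one[OF fin] by auto
  then have "order G \<le> exponent G"
    using roots[OF exponent_pos[OF fin]] by (simp add: order_def)
  then show ?thesis
    using exponent_le_order[OF fin] by simp
qed

lemma pow_eq_pow_if_cong:
  fixes a b d :: nat
  assumes x: "x \<in> carrier G" and "x [^] d = \<one>" and "[a = b] (mod d)"
  shows "x [^] a = x [^] b"
proof -
  have "x [^] c = x [^] (c mod d)" for c :: nat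
  proof -
    have "x [^] c = (x [^] d) [^] (c div d) \<otimes> x [^] (c mod d)"
      using x by (simp add: nat_pow_pow nat_pow_mult)
    then show ?thesis
      using assms by simp
  qed
  then show ?thesis
    using assms(3) by (metis cong_def)
qed

text \<open>With \<open>a u \<equiv> 1 (mod b)\<close> and \<open>b v \<equiv> 1 (mod a)\<close> we have \<open>x = x\<^bsup>b v\<^esup> x\<^bsup>a u\<^esup>\<close>
  on the \<open>ab\<close>-torsion, and the two factors are \<open>a\<close>- and \<open>b\<close>-torsion.\<close>
lemma card_roots_mult_le:
  fixes a b :: nat
  assumes fin: "finite (carrier G)" and ab: "coprime a b"
  shows "card {x \<in> carrier G. x [^] (a * b) = \<one>}
           \<le> card {x \<in> carrier G. x [^] a = \<one>} * card {x \<in> carrier G. x [^] b = \<one>}"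
proof -
  define roots where "roots d = {x \<in> carrier G. x [^] d = \<one>}" for d :: nat
  obtain u where u: "[a * u = 1] (mod b)"
    using cong_solve_coprime_nat[OF ab] by auto
  obtain v where v: "[b * v = 1] (mod a)"
    using cong_solve_coprime_nat[of b a] ab by (auto simp: coprime_commute)
  have "[a * u + b * v = 0 + 1] (mod a)"
    by (rule cong_add[OF _ v]) (simp add: cong_0_iff)
  moreover have "[a * u + b * v = 1 + 0] (mod b)"
    by (rule cong_add[OF u]) (simp add: cong_0_iff)
  ultimately have e: "[a * u + b * v = 1] (mod a * b)"
    using ab by (simp add: coprime_cong_mult_nat)
  define f where "f x = (x [^] (b * v), x [^] (a * u))" for x
  have f_into: "f ` roots (a * b) \<subseteq> roots a \<times> roots b"
  proof
    fix y assume "y \<in> f ` roots (a * b)"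
    then obtain x where x: "x \<in> carrier G" and xab: "x [^] (a * b) = \<one>" and y: "y = f x"
      by (auto simp: roots_def)
    have "(x [^] (b * v)) [^] a = (x [^] (a * b)) [^] v"
      "(x [^] (a * u)) [^] b = (x [^] (a * b)) [^] u"
      using x by (simp_all add: nat_pow_pow ac_simps)
    then show "y \<in> roots a \<times> roots b"
      using x xab by (simp add: y f_def roots_def)
  qed
  have f_inj: "inj_on f (roots (a * b))"
  proof (rule inj_onI)
    have recover: "x = fst (f x) \<otimes> snd (f x)" if "x \<in> roots (a * b)" for x
    proof -
      have x: "x \<in> carrier G" "x [^] (a * b) = \<one>" using that by (auto simp: roots_def)
      have "fst (f x) \<otimes> snd (f x) = x [^] (a * u + b * v)"
        using x by (simp add: f_def nat_pow_mult add.commute)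
      also have "\<dots> = x [^] (1::nat)"
        using pow_eq_pow_if_cong[OF x e] .
      finally show ?thesis using x by simp
    qed
    fix x y assume "x \<in> roots (a * b)" "y \<in> roots (a * b)" "f x = f y"
    then show "x = y" using recover by metis
  qed
  have "finite (roots d)" for d
    using fin by (simp add: roots_def)
  then have "card (roots (a * b)) \<le> card (roots a \<times> roots b)"
    using card_image[OF f_inj] card_mono[OF _ f_into] by (metis finite_cartesian_product)
  then show ?thesis
    by (simp add: roots_def card_cartesian_product)
qed

end

context comm_group
begin

lemma squares_subgroup: "subgroup ((\<lambda>x. x \<otimes> x) ` carrier G) G"
proof
  show "(\<lambda>x. x \<otimes> x) ` carrier G \<subseteq> carrier G" "\<one> \<in> (\<lambda>x. x \<otimes> x) ` carrier G"
    by (auto intro: image_eqI[of _ _ \<one>])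
next
  fix a b assume "a \<in> (\<lambda>x. x \<otimes> x) ` carrier G" "b \<in> (\<lambda>x. x \<otimes> x) ` carrier G"
  then obtain x y where "x \<in> carrier G" "y \<in> carrier G" "a = x \<otimes> x" "b = y \<otimes> y"
    by auto
  then show "a \<otimes> b \<in> (\<lambda>x. x \<otimes> x) ` carrier G"
    by (auto intro!: image_eqI[of _ _ "x \<otimes> y"] simp: m_ac)
next
  fix a assume "a \<in> (\<lambda>x. x \<otimes> x) ` carrier G"
  then obtain x where "x \<in> carrier G" "a = x \<otimes> x"
    by auto
  then show "inv a \<in> (\<lambda>x. x \<otimes> x) ` carrier G"
    by (auto intro!: image_eqI[of _ _ "inv x"] simp: inv_mult)
qed

text \<open>The fibre of the squaring map over \<open>x\<^sub>0\<^sup>2\<close> contains \<open>x\<^sub>0 H\<close>.\<close>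
lemma card_square_roots_mult_card_squares_le:
  assumes fin: "finite (carrier G)" and H: "H \<subseteq> carrier G" "\<And>h. h \<in> H \<Longrightarrow> h \<otimes> h = \<one>"
  shows "card H * card ((\<lambda>x. x \<otimes> x) ` carrier G) \<le> order G"
proof -
  define fibre where "fibre y = {x \<in> carrier G. x \<otimes> x = y}" for y
  have "card H \<le> card (fibre (x0 \<otimes> x0))" if x0: "x0 \<in> carrier G" for x0
  proof -
    have "(x0 \<otimes> h) \<otimes> (x0 \<otimes> h) = (x0 \<otimes> x0) \<otimes> (h \<otimes> h)" if "h \<in> H" for h
      using x0 subsetD[OF H(1) that] by (simp add: m_ac)
    then have "(\<otimes>) x0 ` H \<subseteq> fibre (x0 \<otimes> x0)"
      using H x0 by (auto simp: fibre_def)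
    moreover have "inj_on ((\<otimes>) x0) H"
      using H x0 by (auto simp: inj_on_def subsetD)
    moreover have "finite (fibre (x0 \<otimes> x0))"
      using fin by (simp add: fibre_def)
    ultimately show ?thesis
      using card_mono card_image by metis
  qed
  then have "(\<Sum>y\<in>(\<lambda>x. x \<otimes> x) ` carrier G. card H) \<le> (\<Sum>y\<in>(\<lambda>x. x \<otimes> x) ` carrier G. card (fibre y))"
    by (intro sum_mono) auto
  also have "\<dots> = card (\<Union>y\<in>(\<lambda>x. x \<otimes> x) ` carrier G. fibre y)"
    using fin by (intro card_UN_disjoint[symmetric]) (auto simp: fibre_def)
  also have "(\<Union>y\<in>(\<lambda>x. x \<otimes> x) ` carrier G. fibre y) = carrier G"
    by (auto simp: fibre_def)
  finally show ?thesis
    by (simp add: order_def mult.commute)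
qed

lemma exponent_less_order_if_four_square_roots:
  assumes fin: "finite (carrier G)"
    and H: "H \<subseteq> carrier G" "4 \<le> card H" "\<And>h. h \<in> H \<Longrightarrow> h \<otimes> h = \<one>"
  shows "exponent G < order G"
proof -
  define S where "S = (\<lambda>x. x \<otimes> x) ` carrier G"
  interpret S: group "G\<lparr>carrier := S\<rparr>"
    using subgroup.subgroup_is_group[OF squares_subgroup is_group] by (simp add: S_def)
  have "0 < card S"
    using fin by (auto simp: S_def card_gt_0_iff)
  moreover have "4 * card S \<le> order G"
    using card_square_roots_mult_card_squares_le[OF fin H(1,3)] H(2) S_def
    by (meson le_trans mult_le_mono1)
  moreover have "exponent G \<le> 2 * card S"
  proof (rule exponent_le)
    fix x assume x: "x \<in> carrier G"
    have "x [^] (2 * card S) = (x [^] (2::nat)) [^] card S"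
      using x by (simp add: nat_pow_pow)
    also have "x [^] (2::nat) = x \<otimes> x"
      using x by (simp add: numeral_2_eq_2)
    also have "(x \<otimes> x) [^] card S = \<one>"
      using S.pow_order_eq_1[of "x \<otimes> x"] x
      by (simp add: S_def order_def nat_pow_consistent[symmetric])
    finally show "x [^] (2 * card S) = \<one>" .
  qed (use \<open>0 < card S\<close> in simp)
  ultimately show ?thesis
    by linarith
qed

end

section \<open>Gaussian integers\<close>

datatype gauss_int = Gauss (re: int) (im: int)

instantiation gauss_int :: comm_ring_1
begin
definition "0 = Gauss 0 0"
definition "1 = Gauss 1 0"
definition "z + w = Gauss (re z + re w) (im z + im w)"
definition "z - w = Gauss (re z - re w) (im z - im w)"
definition "- z = Gauss (- re z) (- im z)"
definition "z * w = Gauss (re z * re w - im z * im w) (re z * im w + im z * re w)"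
instance
  by standard (auto simp: zero_gauss_int_def one_gauss_int_def plus_gauss_int_def
      minus_gauss_int_def uminus_gauss_int_def times_gauss_int_def algebra_simps intro: gauss_int.expand)
end

lemma gauss_int_simps [simp]:
  "re 0 = 0" "im 0 = 0" "re 1 = 1" "im 1 = 0"
  "re (z + w) = re z + re w" "im (z + w) = im z + im w"
  "re (z - w) = re z - re w" "im (z - w) = im z - im w"
  "re (- z) = - re z" "im (- z) = - im z"
  "re (z * w) = re z * re w - im z * im w" "im (z * w) = re z * im w + im z * re w"
  by (simp_all add: zero_gauss_int_def one_gauss_int_def plus_gauss_int_def
      minus_gauss_int_def uminus_gauss_int_def times_gauss_int_def)

lemma gauss_int_eq_iff: "z = w \<longleftrightarrow> re z = re w \<and> im z = im w"
  by (cases z; cases w) auto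

lemma re_of_nat [simp]: "re (of_nat k) = int k" and im_of_nat [simp]: "im (of_nat k) = 0"
  by (induction k) auto

lemma re_of_int [simp]: "re (of_int k) = k" and im_of_int [simp]: "im (of_int k) = 0"
  by (cases k rule: int_cases; simp)+

lemma of_int_dvd_gauss_int_iff: "(of_int k :: gauss_int) dvd z \<longleftrightarrow> k dvd re z \<and> k dvd im z"
proof
  assume "(of_int k :: gauss_int) dvd z"
  then show "k dvd re z \<and> k dvd im z" by (auto elim!: dvdE)
next
  assume "k dvd re z \<and> k dvd im z"
  then obtain a b where "re z = k * a" "im z = k * b" by (auto elim!: dvdE)
  then have "z = of_int k * Gauss a b" by (simp add: gauss_int_eq_iff)
  then show "(of_int k :: gauss_int) dvd z" by simp
qed

definition ii :: gauss_int where "ii = Gauss 0 1"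

lemma gauss_int_decompose: "z = of_int (re z) + ii * of_int (im z)"
  by (simp add: gauss_int_eq_iff ii_def)

lemma ii_power_4: "ii ^ 4 = 1"
  by (simp add: gauss_int_eq_iff ii_def numeral_eq_Suc)

definition gconj :: "gauss_int \<Rightarrow> gauss_int" where "gconj z = Gauss (re z) (- im z)"
definition gnorm :: "gauss_int \<Rightarrow> int" where "gnorm z = re z ^ 2 + im z ^ 2"

lemma re_gconj [simp]: "re (gconj z) = re z" and im_gconj [simp]: "im (gconj z) = - im z"
  by (simp_all add: gconj_def)

lemma gconj_one [simp]: "gconj 1 = 1"
  by (simp add: gauss_int_eq_iff)

lemma gconj_mult: "gconj (z * w) = gconj z * gconj w"
  by (simp add: gauss_int_eq_iff)

lemma gconj_power: "gconj (z ^ k) = gconj z ^ k"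
  by (induction k) (auto simp: gconj_mult gauss_int_eq_iff)

lemma mult_gconj: "z * gconj z = of_int (gnorm z)"
  by (simp add: gauss_int_eq_iff gnorm_def power2_eq_square)

lemma gnorm_mult: "gnorm (z * w) = gnorm z * gnorm w"
  by (simp add: gnorm_def power2_eq_square algebra_simps)

lemma gnorm_power: "gnorm (z ^ k) = gnorm z ^ k"
  by (induction k) (simp_all add: gnorm_mult, simp add: gnorm_def)

lemma gnorm_eq_0_iff [simp]: "gnorm z = 0 \<longleftrightarrow> z = 0"
  by (simp add: gnorm_def gauss_int_eq_iff)

lemma gnorm_0 [simp]: "gnorm 0 = 0"
  by simp

instance gauss_int :: idom
proof
  fix z w :: gauss_int
  assume "z \<noteq> 0" "w \<noteq> 0"
  then show "z * w \<noteq> 0"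
    by (simp flip: gnorm_eq_0_iff add: gnorm_mult)
qed

instance gauss_int :: ring_char_0
  by standard (auto intro: injI simp: gauss_int_eq_iff)

lemma gnorm_gconj [simp]: "gnorm (gconj z) = gnorm z"
  by (simp add: gnorm_def)

definition gcong :: "int \<Rightarrow> gauss_int \<Rightarrow> gauss_int \<Rightarrow> bool" where
  "gcong n z w \<longleftrightarrow> (of_int n :: gauss_int) dvd z - w"

lemma gcong_iff: "gcong n z w \<longleftrightarrow> [re z = re w] (mod n) \<and> [im z = im w] (mod n)"
  by (simp add: gcong_def of_int_dvd_gauss_int_iff cong_iff_dvd_diff)

lemma gcong_of_int_iff: "gcong n (of_int a) (of_int b) \<longleftrightarrow> [a = b] (mod n)"
  by (simp add: gcong_iff)

lemma gcong_refl [simp]: "gcong n z z"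
  by (simp add: gcong_def)

lemma gcong_sym: "gcong n z w \<Longrightarrow> gcong n w z"
  by (simp add: gcong_iff cong_sym)

lemma gcong_trans [trans]: "gcong n z w \<Longrightarrow> gcong n w u \<Longrightarrow> gcong n z u"
  by (auto simp: gcong_iff intro: cong_trans)

lemma gcong_add: "gcong n z w \<Longrightarrow> gcong n z' w' \<Longrightarrow> gcong n (z + z') (w + w')"
  by (simp add: gcong_iff cong_add)

lemma gcong_mult: "gcong n z w \<Longrightarrow> gcong n z' w' \<Longrightarrow> gcong n (z * z') (w * w')"
  by (simp add: gcong_iff cong_add cong_diff cong_mult)

lemma gcong_power: "gcong n z w \<Longrightarrow> gcong n (z ^ k) (w ^ k)"
  by (induction k) (auto intro: gcong_mult)

lemma gcong_gconj: "gcong n z w \<Longrightarrow> gcong n (gconj z) (gconj w)"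
  by (simp add: gcong_iff cong_minus_minus_iff)

lemma gcong_dvd_modulus: "gcong n z w \<Longrightarrow> m dvd n \<Longrightarrow> gcong m z w"
  by (auto simp: gcong_iff intro: cong_dvd_modulus)

lemma gcong_gnorm: "gcong n z w \<Longrightarrow> [gnorm z = gnorm w] (mod n)"
  by (metis gcong_gconj gcong_mult gcong_of_int_iff mult_gconj)

definition gauss_mod :: "int \<Rightarrow> gauss_int \<Rightarrow> gauss_int" where
  "gauss_mod n z = Gauss (re z mod n) (im z mod n)"

lemma re_gauss_mod [simp]: "re (gauss_mod n z) = re z mod n"
  and im_gauss_mod [simp]: "im (gauss_mod n z) = im z mod n"
  by (simp_all add: gauss_mod_def)

lemma gauss_mod_eq_iff: "gauss_mod n z = gauss_mod n w \<longleftrightarrow> gcong n z w"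
  by (simp add: gauss_int_eq_iff gcong_iff cong_def)

lemma gcong_gauss_mod: "gcong n (gauss_mod n z) z"
  by (simp add: gcong_iff cong_def)

lemma gauss_mod_gauss_mod [simp]: "gauss_mod n (gauss_mod n z) = gauss_mod n z"
  by (simp add: gauss_int_eq_iff)

lemma gauss_mod_mult_gauss_mod:
  "gauss_mod n (gauss_mod n z * w) = gauss_mod n (z * w)"
  "gauss_mod n (z * gauss_mod n w) = gauss_mod n (z * w)"
  by (simp_all add: gauss_mod_eq_iff gcong_mult gcong_gauss_mod)

lemma gauss_mod_add_gauss_mod:
  "gauss_mod n (gauss_mod n z + w) = gauss_mod n (z + w)"
  "gauss_mod n (z + gauss_mod n w) = gauss_mod n (z + w)"
  by (simp_all add: gauss_mod_eq_iff gcong_add gcong_gauss_mod)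

lemma gauss_mod_one: "n \<ge> 2 \<Longrightarrow> gauss_mod (int n) 1 = 1"
  by (simp add: gauss_int_eq_iff)

lemma gauss_mod_zero [simp]: "gauss_mod n 0 = 0"
  by (simp add: gauss_int_eq_iff)

definition gauss_of_pair :: "int \<times> int \<Rightarrow> gauss_int" where
  "gauss_of_pair x = Gauss (fst x) (snd x)"

definition pair_of_gauss :: "gauss_int \<Rightarrow> int \<times> int" where
  "pair_of_gauss z = (re z, im z)"

lemma gauss_of_pair_of_gauss [simp]: "gauss_of_pair (pair_of_gauss z) = z"
  and pair_of_gauss_of_pair [simp]: "pair_of_gauss (gauss_of_pair x) = x"
  by (simp_all add: gauss_of_pair_def pair_of_gauss_def)

lemma re_gauss_of_pair [simp]: "re (gauss_of_pair x) = fst x"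
  and im_gauss_of_pair [simp]: "im (gauss_of_pair x) = snd x"
  by (simp_all add: gauss_of_pair_def)

lemma inj_gauss_of_pair: "inj gauss_of_pair"
  by (metis injI pair_of_gauss_of_pair)

lemma mem_carrier_G:
  "x \<in> carrier (G n) \<longleftrightarrow> 0 \<le> fst x \<and> fst x < int n \<and> 0 \<le> snd x \<and> snd x < int n \<and>
     [fst x ^ 2 + snd x ^ 2 = 1] (mod int n)"
  by (cases x) (simp add: G_def)

lemma carrier_G_iff:
  assumes "n \<ge> 1"
  shows "x \<in> carrier (G n) \<longleftrightarrow>
    gauss_mod n (gauss_of_pair x) = gauss_of_pair x \<and> [gnorm (gauss_of_pair x) = 1] (mod int n)"
proof -
  have "a mod int n = a \<longleftrightarrow> 0 \<le> a \<and> a < int n" for a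
    using assms by (auto simp: zmod_trivial_iff)
  then show ?thesis
    by (simp add: mem_carrier_G gauss_int_eq_iff gnorm_def conj_assoc)
qed

lemma finite_carrier_G: "finite (carrier (G n))"
proof (rule finite_subset)
  show "carrier (G n) \<subseteq> {0..<int n} \<times> {0..<int n}"
    by (auto simp: mem_carrier_G)
qed simp

lemma mult_G: "x \<otimes>\<^bsub>G n\<^esub> y = pair_of_gauss (gauss_mod n (gauss_of_pair x * gauss_of_pair y))"
  by (simp add: G_def gauss_mult_def pair_of_gauss_def)

lemma one_G: "\<one>\<^bsub>G n\<^esub> = pair_of_gauss (gauss_mod n 1)"
  by (simp add: G_def pair_of_gauss_def)

lemma pow_G: "x [^]\<^bsub>G n\<^esub> (k::nat) = pair_of_gauss (gauss_mod n (gauss_of_pair x ^ k))"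
  by (induction k) (simp_all add: one_G mult_G gauss_mod_mult_gauss_mod mult.commute)

lemma pow_G_eq_one_iff:
  "x [^]\<^bsub>G n\<^esub> (k::nat) = \<one>\<^bsub>G n\<^esub> \<longleftrightarrow> gcong n (gauss_of_pair x ^ k) 1"
  by (metis gauss_mod_eq_iff gauss_of_pair_of_gauss one_G pow_G)

lemma comm_group_G:
  assumes "n \<ge> 2"
  shows "comm_group (G n)"
proof -
  have carrier: "x \<in> carrier (G n) \<longleftrightarrow>
      gauss_mod n (gauss_of_pair x) = gauss_of_pair x \<and> [gnorm (gauss_of_pair x) = 1] (mod int n)" for x
    using assms carrier_G_iff by simp
  note norm_mod = cong_trans[OF gcong_gnorm[OF gcong_gauss_mod]]
  show ?thesis
  proof (rule comm_groupI)
    fix x y assume "x \<in> carrier (G n)" "y \<in> carrier (G n)"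
    then have "[gnorm (gauss_of_pair x * gauss_of_pair y) = 1] (mod int n)"
      using carrier by (metis cong_mult gnorm_mult mult_1)
    then show "x \<otimes>\<^bsub>G n\<^esub> y \<in> carrier (G n)"
      using carrier norm_mod by (simp add: mult_G)
  next
    show "\<one>\<^bsub>G n\<^esub> \<in> carrier (G n)"
      using assms by (simp add: mem_carrier_G G_def)
  next
    fix x y z
    show "x \<otimes>\<^bsub>G n\<^esub> y \<otimes>\<^bsub>G n\<^esub> z = x \<otimes>\<^bsub>G n\<^esub> (y \<otimes>\<^bsub>G n\<^esub> z)"
      by (simp add: mult_G gauss_mod_mult_gauss_mod mult.assoc)
    show "x \<otimes>\<^bsub>G n\<^esub> y = y \<otimes>\<^bsub>G n\<^esub> x"
      by (simp add: mult_G mult.commute)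
  next
    fix x assume "x \<in> carrier (G n)"
    then show "\<one>\<^bsub>G n\<^esub> \<otimes>\<^bsub>G n\<^esub> x = x"
      using carrier by (simp add: one_G mult_G gauss_mod_mult_gauss_mod)
  next
    fix x assume x: "x \<in> carrier (G n)"
    define y where "y = pair_of_gauss (gauss_mod n (gconj (gauss_of_pair x)))"
    have y: "y \<in> carrier (G n)"
      using x carrier norm_mod by (simp add: y_def)
    have "gauss_mod n (of_int (gnorm (gauss_of_pair x))) = gauss_mod n 1"
      using x carrier gcong_of_int_iff[of n _ 1] by (simp add: gauss_mod_eq_iff)
    then have "y \<otimes>\<^bsub>G n\<^esub> x = \<one>\<^bsub>G n\<^esub>"
      using x carrier by (simp add: y_def mult_G one_G gauss_mod_mult_gauss_mod
          mult.commute[of "gconj _"] mult_gconj)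
    with y show "\<exists>y\<in>carrier (G n). y \<otimes>\<^bsub>G n\<^esub> x = \<one>\<^bsub>G n\<^esub>"
      by blast
  qed
qed

lemma Phi_eq_order: "Phi n = order (G n)"
  by (simp add: Phi_def order_def)

lemma Lambda_eq_exponent: "Lambda n = exponent (G n)"
  by (simp add: Lambda_def exponent_def)

section \<open>Four square roots of unity force \<open>\<Lambda> n < \<Phi> n\<close>\<close>

lemma square_root_of_one_G:
  assumes "0 \<le> a" "a < int n" "0 \<le> b" "b < int n"
    and "[a^2 + b^2 = 1] (mod int n)" "[a^2 - b^2 = 1] (mod int n)" "[2 * a * b = 0] (mod int n)"
  shows "(a, b) \<in> carrier (G n) \<and> (a, b) \<otimes>\<^bsub>G n\<^esub> (a, b) = \<one>\<^bsub>G n\<^esub>"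
  using assms by (simp add: mem_carrier_G G_def gauss_mult_def cong_def power2_eq_square mult_ac)

lemma real_square_roots_of_one_G:
  assumes "0 < a" "a < int n" "[a^2 = 1] (mod int n)"
  shows "(a, 0) \<in> carrier (G n) \<and> (a, 0) \<otimes>\<^bsub>G n\<^esub> (a, 0) = \<one>\<^bsub>G n\<^esub>"
    and "(int n - a, 0) \<in> carrier (G n) \<and> (int n - a, 0) \<otimes>\<^bsub>G n\<^esub> (int n - a, 0) = \<one>\<^bsub>G n\<^esub>"
proof -
  have "[(int n - a)^2 = a^2] (mod int n)"
    by (rule cong_of_diff_eq_mult[of _ _ _ "int n - 2 * a"]) (simp add: algebra_simps power2_eq_square)
  then have "[(int n - a)^2 = 1] (mod int n)"
    using assms(3) by (rule cong_trans)
  then show "(int n - a, 0) \<in> carrier (G n) \<and> (int n - a, 0) \<otimes>\<^bsub>G n\<^esub> (int n - a, 0) = \<one>\<^bsub>G n\<^esub>"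
    using assms by (intro square_root_of_one_G) auto
  show "(a, 0) \<in> carrier (G n) \<and> (a, 0) \<otimes>\<^bsub>G n\<^esub> (a, 0) = \<one>\<^bsub>G n\<^esub>"
    using assms by (intro square_root_of_one_G) auto
qed

lemma Lambda_less_Phi_if_four_square_roots:
  assumes "n \<ge> 2" "H \<subseteq> carrier (G n)" "card H = 4" "\<And>h. h \<in> H \<Longrightarrow> h \<otimes>\<^bsub>G n\<^esub> h = \<one>\<^bsub>G n\<^esub>"
  shows "Lambda n < Phi n"
  using comm_group.exponent_less_order_if_four_square_roots[OF comm_group_G finite_carrier_G] assms
  by (simp add: Lambda_eq_exponent Phi_eq_order)

text \<open>The four square roots \<open>\<plusminus>1, k \<plusminus> 1 + k i\<close> of unity modulo \<open>2k\<close>.\<close>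
lemma Lambda_less_Phi_even:
  assumes "m \<ge> 2"
  shows "Lambda (2 * m) < Phi (2 * m)"
proof -
  define k where "k = int m"
  have n: "int (2 * m) = 2 * k" "k \<ge> 2"
    using assms by (simp_all add: k_def)
  define H where "H = {(1, 0), (2 * k - 1, 0), (k + 1, k), (k - 1, k)}"
  have pm: "(k + s, k) \<in> carrier (G (2 * m)) \<and> (k + s, k) \<otimes>\<^bsub>G (2 * m)\<^esub> (k + s, k) = \<one>\<^bsub>G (2 * m)\<^esub>"
    if s: "s = 1 \<or> s = -1" for s
  proof (rule square_root_of_one_G)
    show "[(k + s)^2 + k^2 = 1] (mod int (2 * m))"
      unfolding n(1) by (rule cong_of_diff_eq_mult[of _ _ _ "k + s"])
        (use s in \<open>auto simp: algebra_simps power2_eq_square\<close>)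
    show "[(k + s)^2 - k^2 = 1] (mod int (2 * m))"
      unfolding n(1) by (rule cong_of_diff_eq_mult[of _ _ _ s])
        (use s in \<open>auto simp: algebra_simps power2_eq_square\<close>)
    show "[2 * (k + s) * k = 0] (mod int (2 * m))"
      unfolding n(1) by (rule cong_of_diff_eq_mult[of _ _ _ "k + s"]) simp
  qed (use s n in auto)
  have "x \<in> carrier (G (2 * m)) \<and> x \<otimes>\<^bsub>G (2 * m)\<^esub> x = \<one>\<^bsub>G (2 * m)\<^esub>" if "x \<in> H" for x
    using that n real_square_roots_of_one_G[of 1 "2 * m"] pm[of 1] pm[of "-1"] by (auto simp: H_def)
  moreover have "card H = 4"
    using n by (simp add: H_def)
  ultimately show ?thesis
    using assms by (intro Lambda_less_Phi_if_four_square_roots[of _ H]) auto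
qed

lemma square_root_of_one_crt:
  fixes a b :: int
  assumes "coprime a b" "a > 1" "b > 0"
  obtains c where "0 < c" "c < a * b" "[c = 1] (mod a)" "[c = -1] (mod b)" "[c^2 = 1] (mod a * b)"
proof -
  obtain c0 where c0: "[c0 = 1] (mod a)" "[c0 = -1] (mod b)"
    using binary_chinese_remainder_int[OF assms(1)] by blast
  define c where "c = c0 mod (a * b)"
  have "[c = c0] (mod a * b)"
    by (simp add: c_def cong_def)
  then have "[c = c0] (mod a)" "[c = c0] (mod b)"
    by (auto elim: cong_dvd_modulus)
  then have c: "[c = 1] (mod a)" "[c = -1] (mod b)"
    using c0 by (auto intro: cong_trans)
  have "a dvd (c - 1) * (c + 1)" "b dvd (c - 1) * (c + 1)"
    using c by (simp_all add: cong_iff_dvd_diff)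
  then have "[c^2 = 1] (mod a * b)"
    using assms(1) by (simp add: cong_iff_dvd_diff divides_mult power2_eq_square algebra_simps)
  moreover have "c \<noteq> 0"
    using c(1) assms(2) by (auto simp: cong_def)
  moreover have "0 \<le> c" "c < a * b"
    using assms(2,3) \<open>c \<noteq> 0\<close> by (auto simp: c_def)
  ultimately show ?thesis
    using c by (intro that) simp_all
qed

lemma crt_square_root_of_one_nontrivial:
  fixes a b c :: int
  assumes a: "a > 2" and b: "b > 2" and c: "[c = 1] (mod a)" "[c = -1] (mod b)"
  shows "c \<noteq> 1" "c \<noteq> a * b - 1" "c \<noteq> a * b - c"
proof -
  have ab_minus: "[a * b - x = - x] (mod a)" for x
    by (rule cong_of_diff_eq_mult[of _ _ _ b]) simp
  show "c \<noteq> 1"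
    using c(2) not_cong_one_minus_one[OF b] by auto
  show "c \<noteq> a * b - 1"
  proof
    assume "c = a * b - 1"
    then have "[c = -1] (mod a)"
      using ab_minus by simp
    then show False
      using c(1) not_cong_one_minus_one[OF a] by (metis cong_sym cong_trans)
  qed
  show "c \<noteq> a * b - c"
  proof
    assume "c = a * b - c"
    then have "[1 = - c] (mod a)"
      using c(1) ab_minus by (metis cong_sym cong_trans)
    moreover have "[- c = -1] (mod a)"
      using c(1) by (simp add: cong_minus_minus_iff)
    ultimately show False
      using not_cong_one_minus_one[OF a] cong_trans by blast
  qed
qed

text \<open>The four square roots \<open>\<plusminus>1, \<plusminus>c\<close> of unity modulo \<open>ab\<close>, with \<open>c \<equiv> 1 (mod a)\<close>
  and \<open>c \<equiv> -1 (mod b)\<close>.\<close>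
lemma Lambda_less_Phi_coprime:
  assumes "coprime a b" "a \<ge> 3" "b \<ge> 3"
  shows "Lambda (a * b) < Phi (a * b)"
proof -
  define N where "N = int (a * b)"
  obtain c where c: "0 < c" "c < N" "[c = 1] (mod int a)" "[c = -1] (mod int b)" "[c^2 = 1] (mod N)"
    using square_root_of_one_crt[of "int a" "int b"] assms by (auto simp: N_def)
  have "c \<noteq> 1" "c \<noteq> N - 1" "c \<noteq> N - c"
    using crt_square_root_of_one_nontrivial[of "int a" "int b" c] assms c(3,4) by (simp_all add: N_def)
  moreover have "N \<ge> 9"
    using mult_mono[OF assms(2,3)] unfolding N_def by linarith
  moreover define H :: "(int \<times> int) set" where "H = {(1, 0), (N - 1, 0), (c, 0), (N - c, 0)}"
  ultimately have "card H = 4"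
    by (simp add: H_def)
  moreover have "x \<in> carrier (G (a * b)) \<and> x \<otimes>\<^bsub>G (a * b)\<^esub> x = \<one>\<^bsub>G (a * b)\<^esub>" if "x \<in> H" for x
    using that c \<open>N \<ge> 9\<close> real_square_roots_of_one_G[of 1 "a * b", folded N_def]
      real_square_roots_of_one_G[of c "a * b", folded N_def]
    by (auto simp: H_def)
  ultimately show ?thesis
    using mult_mono[OF assms(2,3)] by (intro Lambda_less_Phi_if_four_square_roots[of _ H]) auto
qed

lemma odd_non_prime_power_coprime_factors:
  fixes n :: nat
  assumes n: "odd n" "n \<ge> 2" and not_pp: "\<not> (\<exists>p r. prime p \<and> r > 0 \<and> n = p ^ r)"
  obtains a b where "n = a * b" "coprime a b" "a \<ge> 3" "b \<ge> 3"
proof -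
  obtain p where p: "prime p" "p dvd n"
    using n prime_factor_nat[of n] by auto
  define r where "r = multiplicity p n"
  define b where "b = n div p ^ r"
  have n_eq: "n = p ^ r * b"
    using multiplicity_dvd[of p n] by (simp add: r_def b_def)
  have "r > 0"
    using p n by (simp add: r_def prime_multiplicity_gt_zero_iff)
  have "p \<ge> 3"
    using odd_prime_ge_3[OF p(1)] p(2) n(1) by (meson dvd_trans even_numeral)
  then have "p ^ r \<ge> 3"
    using \<open>r > 0\<close> self_le_power[of p r] by simp
  have "\<not> p dvd b"
    unfolding b_def r_def using n p(1) not_prime_unit by (intro multiplicity_decompose) auto
  then have "coprime (p ^ r) b"
    using p(1) by (simp add: prime_imp_coprime)
  moreover have "b \<noteq> 1"
    using not_pp p(1) \<open>r > 0\<close> n_eq by (metis mult_1_right)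
  then have "b \<ge> 3"
    using n(1) n_eq by (cases "b = 0 \<or> b = 2") auto
  ultimately show ?thesis
    using that \<open>p ^ r \<ge> 3\<close> n_eq by blast
qed

lemma Lambda_less_Phi_if_not_odd_prime_power:
  assumes n: "n \<ge> 2" and not_pp: "\<not> (n = 2 \<or> (\<exists>p r. prime p \<and> odd p \<and> r > 0 \<and> n = p ^ r))"
  shows "Lambda n < Phi n"
proof (cases "even n")
  case True
  then obtain m where "n = 2 * m"
    by blast
  moreover have "n \<noteq> 2"
    using not_pp by blast
  ultimately have "m \<ge> 2"
    using n by linarith
  then show ?thesis
    using Lambda_less_Phi_even \<open>n = 2 * m\<close> by simp
next
  case False
  have "\<not> (\<exists>p r. prime p \<and> r > 0 \<and> n = p ^ r)"
    using not_pp False by (metis even_power)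
  then obtain a b where "n = a * b" "coprime a b" "a \<ge> 3" "b \<ge> 3"
    using odd_non_prime_power_coprime_factors False n by blast
  then show ?thesis
    using Lambda_less_Phi_coprime by simp
qed

section \<open>Frobenius and lifting modulo powers of an odd prime\<close>

lemma freshmans_dream_dvd:
  fixes x y :: "'a :: comm_ring_1"
  assumes "prime p"
  shows "of_nat p dvd (x + y) ^ p - (x ^ p + y ^ p)"
proof -
  have p: "p \<ge> 2"
    using prime_ge_2_nat[OF assms] .
  define f where "f k = of_nat (p choose k) * x ^ k * y ^ (p - k)" for k
  have "(x + y) ^ p = (\<Sum>k\<in>insert 0 (insert p {1..<p}). f k)"
    unfolding binomial_ring f_def using p by (intro sum.cong) auto
  also have "\<dots> = (x ^ p + y ^ p) + (\<Sum>k\<in>{1..<p}. f k)"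
    using p by (simp add: f_def)
  finally have "(x + y) ^ p - (x ^ p + y ^ p) = (\<Sum>k\<in>{1..<p}. f k)"
    by simp
  also have "of_nat p dvd \<dots>"
  proof (rule dvd_sum)
    fix k assume "k \<in> {1..<p}"
    then have "p dvd (p choose k)"
      using assms by (intro dvd_choose_prime) auto
    then obtain c where "p choose k = p * c"
      by blast
    then show "of_nat p dvd f k"
      by (simp add: f_def mult.assoc)
  qed
  finally show ?thesis .
qed

lemma fermat_theorem_int:
  assumes "prime p"
  shows "[a ^ p = a] (mod int p)"
proof (cases "int p dvd a")
  case True
  then show ?thesis
    using prime_gt_0_nat[OF assms]
    by (simp add: cong_iff_dvd_diff dvd_diff dvd_trans[OF True dvd_power])
next
  case False
  have p: "int p > 0"
    using prime_gt_0_nat[OF assms] by simp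
  define c where "c = nat (a mod int p)"
  have c: "[int c = a] (mod int p)"
    using p by (simp add: c_def cong_def)
  then have "\<not> p dvd c"
    using False by (metis cong_dvd_iff int_dvd_int_iff)
  then have "[c ^ (p - 1) = 1] (mod p)"
    using fermat_theorem[OF assms] by simp
  then have "[int c ^ (p - 1) = 1] (mod int p)"
    by (metis cong_int_iff of_nat_1 of_nat_power)
  then have "[a ^ (p - 1) = 1] (mod int p)"
    using cong_pow[OF c] by (metis cong_sym cong_trans)
  then have "[a * a ^ (p - 1) = a * 1] (mod int p)"
    by (rule cong_scalar_left)
  then show ?thesis
    using prime_gt_0_nat[OF assms] by (simp add: power_eq_if)
qed

lemma gauss_power_prime_cong:
  assumes "prime p"
  shows "gcong p (z ^ p) (of_int (re z) + ii ^ p * of_int (im z))"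
proof -
  have "gcong p (z ^ p) ((of_int (re z)) ^ p + (ii * of_int (im z)) ^ p)"
    using freshmans_dream_dvd[OF assms, of "of_int (re z)" "ii * of_int (im z)"]
    by (subst gauss_int_decompose) (simp add: gcong_def)
  moreover have "gcong p ((of_int (re z)) ^ p + (ii * of_int (im z)) ^ p)
      (of_int (re z) + ii ^ p * of_int (im z))"
    using fermat_theorem_int[OF assms] gcong_of_int_iff
    unfolding power_mult_distrib by (metis gcong_add gcong_mult gcong_refl of_int_power)
  ultimately show ?thesis
    by (rule gcong_trans)
qed

lemma gauss_power_prime_cong_1mod4:
  assumes "prime p" "p mod 4 = 1"
  shows "gcong p (z ^ p) z"
proof -
  have "p = 4 * (p div 4) + 1"
    using assms(2) by presburger
  then have "ii ^ p = (ii ^ 4) ^ (p div 4) * ii"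
    by (metis power_add power_mult power_one_right)
  then have "ii ^ p = ii"
    by (simp add: ii_power_4)
  then show ?thesis
    using gauss_power_prime_cong[OF assms(1), of z] gauss_int_decompose[of z] by simp
qed

lemma gauss_power_prime_cong_3mod4:
  assumes "prime p" "p mod 4 = 3"
  shows "gcong p (z ^ p) (gconj z)"
proof -
  have "p = 4 * (p div 4) + 3"
    using assms(2) by presburger
  then have "ii ^ p = (ii ^ 4) ^ (p div 4) * ii ^ 3"
    by (metis power_add power_mult)
  moreover have "ii ^ 3 = - ii"
    by (simp add: ii_def gauss_int_eq_iff numeral_eq_Suc)
  ultimately have "ii ^ p = - ii"
    by (simp add: ii_power_4)
  moreover have "of_int (re z) - ii * of_int (im z) = gconj z"
    by (simp add: gauss_int_eq_iff ii_def)
  ultimately show ?thesis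
    using gauss_power_prime_cong[OF assms(1), of z] by simp
qed

text \<open>For \<open>p \<equiv> 3 (mod 4)\<close> Frobenius is conjugation, which inverts elements of norm \<open>1\<close>.\<close>
lemma gcong_one_if_power_prime_cong_one:
  assumes "prime p" "odd p" "[gnorm z = 1] (mod int p)" "gcong p (z ^ p) 1"
  shows "gcong p z 1"
proof -
  have "p mod 4 = 1 \<or> p mod 4 = 3"
    using assms(2) by presburger
  then consider "p mod 4 = 1" | "p mod 4 = 3"
    by blast
  then show ?thesis
  proof cases
    case 1
    then show ?thesis
      using gauss_power_prime_cong_1mod4[OF assms(1)] assms(4) gcong_sym gcong_trans by blast
  next
    case 2
    then have "gcong p (gconj z) 1"
      using gauss_power_prime_cong_3mod4[OF assms(1)] assms(4) gcong_sym gcong_trans by blast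
    then have "gcong p (z * gconj z) z"
      using gcong_mult[OF gcong_refl[of p z]] by fastforce
    moreover have "gcong p (z * gconj z) 1"
      using assms(3) by (simp add: mult_gconj gcong_of_int_iff[of _ _ 1, simplified])
    ultimately show ?thesis
      using gcong_sym gcong_trans by blast
  qed
qed

lemma gcong_one_if_power_prime_power_cong_one:
  assumes "prime p" "odd p"
  shows "[gnorm z = 1] (mod int p) \<Longrightarrow> gcong p (z ^ (p ^ s)) 1 \<Longrightarrow> gcong p z 1"
proof (induction s arbitrary: z)
  case (Suc s)
  have "[gnorm (z ^ p) = 1] (mod int p)"
    using cong_pow[OF Suc.prems(1), of p] by (simp add: gnorm_power)
  moreover have "gcong p ((z ^ p) ^ (p ^ s)) 1"
    using Suc.prems(2) by (simp add: power_mult[symmetric] mult.commute)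
  ultimately have "gcong p (z ^ p) 1"
    by (rule Suc.IH)
  then show ?case
    by (rule gcong_one_if_power_prime_cong_one[OF assms Suc.prems(1)])
qed simp

lemma prime_power_dvd_binomial_term:
  fixes u :: "'a :: comm_ring_1"
  assumes p: "prime p" "p \<ge> 3" and j: "j \<ge> 1" and k: "2 \<le> k" "k \<le> p"
  defines "q \<equiv> of_nat p :: 'a"
  shows "q ^ (j + 2) dvd of_nat (p choose k) * (q ^ j * u) ^ k"
proof -
  have k_term: "of_nat (p choose k) * (q ^ j * u) ^ k = of_nat (p choose k) * (q ^ (j * k) * u ^ k)"
    by (simp add: power_mult_distrib power_mult)
  show ?thesis
  proof (cases "k = p")
    case True
    then have "j + 2 \<le> j * k"
      using j p(2) mult_le_mono2[of 3 k j] by linarith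
    then have "q ^ (j + 2) dvd q ^ (j * k)"
      by (rule le_imp_power_dvd)
    then show ?thesis
      unfolding k_term by (metis dvd_mult dvd_mult2)
  next
    case False
    then have "p dvd (p choose k)"
      using p k by (intro dvd_choose_prime) auto
    then obtain c where c: "p choose k = p * c"
      by blast
    have "j + 1 \<le> j * k"
      using j k mult_le_mono2[of 2 k j] by linarith
    then have "q ^ (j + 1) dvd q ^ (j * k)"
      by (rule le_imp_power_dvd)
    then have "q * q ^ (j + 1) dvd q * (of_nat c * (q ^ (j * k) * u ^ k))"
      by (metis mult_dvd_mono dvd_refl dvd_mult dvd_mult2)
    then show ?thesis
      unfolding k_term by (simp add: c q_def mult.assoc)
  qed
qed

lemma binomial_expansion_one_plus_prime_power:
  fixes u :: "'a :: comm_ring_1"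
  assumes p: "prime p" "p \<ge> 3" and j: "j \<ge> 1"
  defines "q \<equiv> of_nat p :: 'a"
  shows "\<exists>v. (1 + q ^ j * u) ^ p = 1 + q ^ (j + 1) * u + q ^ (j + 2) * v"
proof -
  define f where "f k = of_nat (p choose k) * (q ^ j * u) ^ k" for k
  have "(1 + q ^ j * u) ^ p = (\<Sum>k\<in>insert 0 (insert 1 {2..p}). f k)"
    unfolding add.commute[of 1] binomial_ring f_def using p by (intro sum.cong) auto
  also have "\<dots> = 1 + q ^ (j + 1) * u + (\<Sum>k\<in>{2..p}. f k)"
    by (simp add: f_def q_def algebra_simps)
  finally have expand: "(1 + q ^ j * u) ^ p = 1 + q ^ (j + 1) * u + (\<Sum>k\<in>{2..p}. f k)" .
  have "q ^ (j + 2) dvd (\<Sum>k\<in>{2..p}. f k)"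
    using prime_power_dvd_binomial_term[OF p j] by (intro dvd_sum) (auto simp: f_def q_def)
  then obtain v where "(\<Sum>k\<in>{2..p}. f k) = q ^ (j + 2) * v"
    by (elim dvdE)
  then show ?thesis
    using expand by auto
qed

lemma gcong_prime_power_one_iff:
  "gcong (int p ^ j) w 1 \<longleftrightarrow> (\<exists>u. w = 1 + of_nat p ^ j * u)"
proof -
  have "gcong (int p ^ j) w 1 \<longleftrightarrow> of_nat p ^ j dvd w - 1"
    by (simp add: gcong_def)
  also have "\<dots> \<longleftrightarrow> (\<exists>u. w = 1 + of_nat p ^ j * u)"
    by (auto elim!: dvdE simp: algebra_simps)
  finally show ?thesis .
qed

lemma gcong_power_prime_lift:
  assumes "prime p" "p \<ge> 3" "j \<ge> 1" "gcong (int p ^ j) w 1"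
  shows "gcong (int p ^ (j + 1)) (w ^ p) 1"
proof -
  let ?q = "of_nat p :: gauss_int"
  obtain u where u: "w = 1 + ?q ^ j * u"
    using assms(4) gcong_prime_power_one_iff by blast
  obtain v where "(1 + ?q ^ j * u) ^ p = 1 + ?q ^ (j + 1) * u + ?q ^ (j + 2) * v"
    using binomial_expansion_one_plus_prime_power[OF assms(1-3)] by blast
  then have "w ^ p = 1 + ?q ^ (j + 1) * (u + ?q * v)"
    using u by (simp add: algebra_simps)
  then show ?thesis
    using gcong_prime_power_one_iff by blast
qed

lemma gcong_power_prime_descend:
  assumes "prime p" "p \<ge> 3" "j \<ge> 1" "gcong (int p ^ j) w 1" "gcong (int p ^ (j + 2)) (w ^ p) 1"
  shows "gcong (int p ^ (j + 1)) w 1"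
proof -
  let ?q = "of_nat p :: gauss_int"
  obtain u where u: "w = 1 + ?q ^ j * u"
    using assms(4) gcong_prime_power_one_iff by blast
  obtain v where v: "(1 + ?q ^ j * u) ^ p = 1 + ?q ^ (j + 1) * u + ?q ^ (j + 2) * v"
    using binomial_expansion_one_plus_prime_power[OF assms(1-3)] by blast
  obtain v' where v': "w ^ p = 1 + ?q ^ (j + 2) * v'"
    using assms(5) gcong_prime_power_one_iff by blast
  have "?q ^ (j + 1) * u + ?q ^ (j + 2) * v = ?q ^ (j + 2) * v'"
    using u v v' by simp
  then have "?q ^ (j + 1) * u = ?q ^ (j + 1) * (?q * (v' - v))"
    by (simp add: algebra_simps eq_diff_eq)
  then have "u = ?q * (v' - v)"
    using prime_gt_0_nat[OF assms(1)] by simp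
  then have "w = 1 + ?q ^ (j + 1) * (v' - v)"
    using u by (simp add: ac_simps)
  then show ?thesis
    using gcong_prime_power_one_iff by blast
qed

lemma gcong_power_prime_power_lift:
  assumes "prime p" "p \<ge> 3" "gcong p w 1"
  shows "gcong (int p ^ (t + 1)) (w ^ (p ^ t)) 1"
proof (induction t)
  case (Suc t)
  have "gcong (int p ^ (t + 1 + 1)) ((w ^ (p ^ t)) ^ p) 1"
    by (rule gcong_power_prime_lift[OF assms(1,2) _ Suc]) simp
  then show ?case
    by (simp add: power_mult[symmetric] mult.commute)
qed (use assms in simp)

lemma gcong_descend_from_power_prime:
  assumes "prime p" "p \<ge> 3" "gcong p z 1" "gcong (int p ^ (j + 1)) (z ^ p) 1" "j \<ge> 1"
  shows "gcong (int p ^ j) z 1"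
proof -
  have "gcong (int p ^ (i + 1)) z 1" if "i + 1 \<le> j" for i
    using that
  proof (induction i)
    case (Suc i)
    have "int p ^ (i + 1 + 2) dvd int p ^ (j + 1)"
      using Suc.prems by (intro le_imp_power_dvd) simp
    then have "gcong (int p ^ (i + 1 + 2)) (z ^ p) 1"
      by (rule gcong_dvd_modulus[OF assms(4)])
    then show ?case
      using gcong_power_prime_descend[OF assms(1,2) _ Suc.IH] Suc.prems by simp
  qed (use assms(3) in simp)
  from this[of "j - 1"] show ?thesis
    using assms(5) by simp
qed

lemma gcong_descend_from_power_prime_power:
  assumes "prime p" "p \<ge> 3"
  shows "gcong p z 1 \<Longrightarrow> j \<ge> 1 \<Longrightarrow> gcong (int p ^ (j + s)) (z ^ (p ^ s)) 1 \<Longrightarrow> gcong (int p ^ j) z 1"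
proof (induction s arbitrary: z j)
  case (Suc s)
  have zp: "gcong p (z ^ p) 1"
    using gcong_power_prime_lift[OF assms, of 1 z] Suc.prems(1)
    by (auto elim: gcong_dvd_modulus)
  have "gcong (int p ^ (j + 1 + s)) ((z ^ p) ^ (p ^ s)) 1"
    using Suc.prems(3) by (simp add: power_mult[symmetric] mult.commute)
  then have "gcong (int p ^ (j + 1)) (z ^ p) 1"
    using Suc.IH[OF zp, of "j + 1"] by simp
  then show ?case
    using gcong_descend_from_power_prime[OF assms Suc.prems(1)] Suc.prems(2) by simp
qed simp

section \<open>Counting roots of unity in \<open>G (p\<^sup>r)\<close>\<close>

text \<open>Since \<open>a \<equiv> a' \<equiv> 1 (mod p)\<close>, the factor \<open>a + a'\<close> of \<open>a\<^sup>2 - a'\<^sup>2 \<equiv> 0\<close> is a unit.\<close>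
lemma inj_on_snd_G_prime_power:
  assumes "prime p" "odd p"
  shows "inj_on snd {x \<in> carrier (G (p ^ r)). [fst x = 1] (mod int p)}"
proof (rule inj_onI)
  fix x y assume x: "x \<in> {x \<in> carrier (G (p ^ r)). [fst x = 1] (mod int p)}"
    and y: "y \<in> {x \<in> carrier (G (p ^ r)). [fst x = 1] (mod int p)}" and snd: "snd x = snd y"
  define N where "N = int p ^ r"
  have "[fst x ^ 2 + snd x ^ 2 = fst y ^ 2 + snd y ^ 2] (mod N)"
    using x y by (auto simp: mem_carrier_G N_def intro: cong_sym cong_trans)
  then have "N dvd (fst x + fst y) * (fst x - fst y)"
    using snd by (simp add: cong_iff_dvd_diff power2_eq_square algebra_simps)
  moreover have "[fst x + fst y = 2] (mod int p)"
    using cong_add[of "fst x" 1 "int p" "fst y" 1] x y by simp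
  then have "\<not> int p dvd fst x + fst y"
    using cong_dvd_iff odd_prime_not_dvd_two[OF assms] by blast
  then have "coprime N (fst x + fst y)"
    using assms(1) by (simp add: N_def prime_imp_coprime)
  ultimately have "[fst x = fst y] (mod N)"
    by (simp add: coprime_dvd_mult_right_iff cong_iff_dvd_diff)
  then have "fst x = fst y"
    using x y by (intro cong_less_imp_eq_int) (auto simp: mem_carrier_G N_def)
  then show "x = y"
    using snd by (simp add: prod_eq_iff)
qed

lemma card_G_prime_power_cong_one_le:
  assumes p: "prime p" "odd p" and k: "1 \<le> k" "k \<le> r"
  shows "card {x \<in> carrier (G (p ^ r)). gcong (int p ^ k) (gauss_of_pair x) 1} \<le> p ^ (r - k)"
proof -
  define S where "S = {x \<in> carrier (G (p ^ r)). gcong (int p ^ k) (gauss_of_pair x) 1}"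
  have "int p dvd int p ^ k"
    using k by simp
  then have "S \<subseteq> {x \<in> carrier (G (p ^ r)). [fst x = 1] (mod int p)}"
    by (auto simp: S_def gcong_iff intro: cong_dvd_modulus)
  then have inj: "inj_on snd S"
    using inj_on_snd_G_prime_power[OF p] inj_on_subset by blast
  have "snd ` S \<subseteq> (\<lambda>j. int p ^ k * j) ` {0..<int p ^ (r - k)}"
  proof
    fix b assume "b \<in> snd ` S"
    then obtain x where x: "x \<in> carrier (G (p ^ r))" "[snd x = 0] (mod int p ^ k)" "b = snd x"
      by (auto simp: S_def gcong_iff)
    then obtain j where j: "b = int p ^ k * j"
      by (auto simp: cong_0_iff elim: dvdE)
    have pk: "int p ^ k > 0"
      using prime_gt_0_nat[OF p(1)] by simp
    have "int p ^ k * j < int p ^ k * int p ^ (r - k)"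
      using x j k by (simp add: mem_carrier_G power_add[symmetric])
    moreover have "0 \<le> int p ^ k * j"
      using x j by (simp add: mem_carrier_G)
    ultimately show "b \<in> (\<lambda>j. int p ^ k * j) ` {0..<int p ^ (r - k)}"
      using j pk by (auto simp: zero_le_mult_iff)
  qed
  then have "card (snd ` S) \<le> card {0..<int p ^ (r - k)}"
    by (meson card_image_le card_mono finite_atLeastLessThan_int finite_imageI le_trans)
  then show ?thesis
    using card_image[OF inj] by (simp add: S_def flip: of_nat_power)
qed

text \<open>Elements of \<open>p\<close>-power order are \<open>\<equiv> 1 (mod p)\<close>, and then lie deep in the
  congruence filtration by the lifting lemmas.\<close>
lemma card_roots_G_prime_power_p_part_le:
  assumes p: "prime p" "odd p" and r: "r \<ge> 1"
  shows "card {x \<in> carrier (G (p ^ r)). x [^]\<^bsub>G (p ^ r)\<^esub> (p ^ s) = \<one>\<^bsub>G (p ^ r)\<^esub>} \<le> p ^ s"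
proof -
  define S where "S = {x \<in> carrier (G (p ^ r)). gcong (int p ^ r) (gauss_of_pair x ^ (p ^ s)) 1}"
  have pd: "int p dvd int p ^ r"
    using r by simp
  have "p ^ r \<ge> 1"
    using prime_gt_0_nat[OF p(1)] by simp
  have cong_one: "gcong p (gauss_of_pair x) 1" if "x \<in> S" for x
  proof (rule gcong_one_if_power_prime_power_cong_one[OF p])
    show "[gnorm (gauss_of_pair x) = 1] (mod int p)"
      using that pd carrier_G_iff[OF \<open>p ^ r \<ge> 1\<close>] by (auto simp: S_def intro: cong_dvd_modulus)
    show "gcong p (gauss_of_pair x ^ p ^ s) 1"
      using that pd by (auto simp: S_def intro: gcong_dvd_modulus)
  qed
  have fin: "finite {x \<in> carrier (G (p ^ r)). P x}" for P
    using finite_carrier_G by simp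
  have "card S \<le> p ^ s"
  proof (cases "s \<ge> r")
    case True
    have "card S \<le> card {x \<in> carrier (G (p ^ r)). gcong (int p ^ 1) (gauss_of_pair x) 1}"
      using cong_one by (intro card_mono fin) (auto simp: S_def)
    also have "\<dots> \<le> p ^ (r - 1)"
      using r by (intro card_G_prime_power_cong_one_le[OF p]) auto
    also have "\<dots> \<le> p ^ s"
      using True prime_gt_0_nat[OF p(1)] by (intro power_increasing) auto
    finally show ?thesis .
  next
    case False
    have "gcong (int p ^ (r - s)) (gauss_of_pair x) 1" if "x \<in> S" for x
      using gcong_descend_from_power_prime_power[OF p(1) odd_prime_ge_3[OF p] cong_one[OF that],
          of "r - s" s] that False by (simp add: S_def)
    then have "card S \<le> card {x \<in> carrier (G (p ^ r)). gcong (int p ^ (r - s)) (gauss_of_pair x) 1}"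
      by (intro card_mono fin) (auto simp: S_def)
    also have "\<dots> \<le> p ^ (r - (r - s))"
      using False by (intro card_G_prime_power_cong_one_le[OF p]) auto
    finally show ?thesis
      using False by simp
  qed
  then show ?thesis
    by (simp add: S_def pow_G_eq_one_iff)
qed

lemma gcong_one_if_coprime_powers:
  assumes "gcong n (w ^ a) 1" "gcong n (w ^ b) 1" "coprime a b"
  shows "gcong n w 1"
proof (cases "a = 0")
  case True
  then show ?thesis
    using assms by simp
next
  case False
  then obtain u v where uv: "a * u = b * v + 1"
    using bezout_nat[OF False, of b] assms(3) by auto
  have "gcong n (w ^ (a * u)) 1" "gcong n (w ^ (b * v)) 1"
    using gcong_power[OF assms(1), of u] gcong_power[OF assms(2), of v] by (simp_all add: power_mult)
  moreover have "w ^ (a * u) = w ^ (b * v) * w"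
    by (simp add: uv)
  ultimately have "gcong n (w ^ (b * v) * w) 1" "gcong n (w ^ (b * v) * w) w"
    using gcong_mult[of n "w ^ (b * v)" 1 w w] by simp_all
  then show ?thesis
    using gcong_sym gcong_trans by blast
qed

text \<open>The quotient \<open>z gconj z'\<close> is \<open>\<equiv> 1 (mod p)\<close>, hence of \<open>p\<close>-power order modulo \<open>p\<^sup>r\<close>,
  and also of order dividing \<open>m\<close>.\<close>
lemma gcong_prime_power_if_gcong_prime:
  assumes p: "prime p" "odd p" and r: "r \<ge> 1" and m: "coprime m p"
    and z: "gcong (int p ^ r) (z ^ m) 1"
    and z': "gcong (int p ^ r) (z' ^ m) 1" "[gnorm z' = 1] (mod int p ^ r)"
    and zz': "gcong p z z'"
  shows "gcong (int p ^ r) z z'"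
proof -
  define w where "w = z * gconj z'"
  have norm': "gcong (int p ^ r) (of_int (gnorm z')) 1"
    using z'(2) by (simp add: gcong_of_int_iff[of _ _ 1, simplified])
  have "gcong p w (of_int (gnorm z'))"
    unfolding w_def mult_gconj[symmetric] by (intro gcong_mult zz' gcong_refl)
  also have "gcong p (of_int (gnorm z')) 1"
    using r by (intro gcong_dvd_modulus[OF norm']) simp
  finally have "gcong (int p ^ (r - 1 + 1)) (w ^ (p ^ (r - 1))) 1"
    by (rule gcong_power_prime_power_lift[OF p(1) odd_prime_ge_3[OF p]])
  moreover have "gcong (int p ^ r) (w ^ m) 1"
    using gcong_mult[OF z gcong_gconj[OF z'(1)]] by (simp add: w_def power_mult_distrib gconj_power)
  ultimately have w: "gcong (int p ^ r) w 1"
    using m r by (intro gcong_one_if_coprime_powers[of _ w m "p ^ (r - 1)"]) auto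
  have "gcong (int p ^ r) z (z * of_int (gnorm z'))"
    using gcong_mult[OF gcong_refl gcong_sym[OF norm']] by simp
  also have "z * of_int (gnorm z') = w * z'"
    by (simp add: w_def ac_simps flip: mult_gconj)
  also have "gcong (int p ^ r) (w * z') z'"
    using gcong_mult[OF w gcong_refl[of _ z']] by simp
  finally show ?thesis .
qed

lemma card_roots_G_prime_power_le_card_roots_G_prime:
  assumes p: "prime p" "odd p" and r: "r \<ge> 1" and m: "coprime m p"
  shows "card {x \<in> carrier (G (p ^ r)). x [^]\<^bsub>G (p ^ r)\<^esub> m = \<one>\<^bsub>G (p ^ r)\<^esub>}
         \<le> card {y \<in> carrier (G p). y [^]\<^bsub>G p\<^esub> m = \<one>\<^bsub>G p\<^esub>}"
proof -
  define S where "S = {x \<in> carrier (G (p ^ r)). gcong (int p ^ r) (gauss_of_pair x ^ m) 1}"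
  define T where "T = {y \<in> carrier (G p). gcong p (gauss_of_pair y ^ m) 1}"
  define reduce where "reduce x = pair_of_gauss (gauss_mod p (gauss_of_pair x))" for x
  have pd: "int p dvd int p ^ r"
    using r by simp
  have "p \<ge> 1" "p ^ r \<ge> 1"
    using prime_gt_0_nat[OF p(1)] by simp_all
  have S: "gauss_mod (int p ^ r) (gauss_of_pair x) = gauss_of_pair x"
    "[gnorm (gauss_of_pair x) = 1] (mod int p ^ r)" "gcong (int p ^ r) (gauss_of_pair x ^ m) 1"
    if "x \<in> S" for x
    using that carrier_G_iff[OF \<open>p ^ r \<ge> 1\<close>] by (auto simp: S_def)
  have "reduce ` S \<subseteq> T"
  proof
    fix y assume "y \<in> reduce ` S"
    then obtain x where x: "x \<in> S" and y: "gauss_of_pair y = gauss_mod p (gauss_of_pair x)"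
      by (auto simp: reduce_def)
    then have y_x: "gcong p (gauss_of_pair y) (gauss_of_pair x)"
      using gcong_gauss_mod by simp
    have "[gnorm (gauss_of_pair x) = 1] (mod int p)"
      using S(2)[OF x] pd by (rule cong_dvd_modulus)
    then have "[gnorm (gauss_of_pair y) = 1] (mod int p)"
      using gcong_gnorm[OF y_x] by (rule cong_trans[rotated])
    moreover have "gcong p (gauss_of_pair x ^ m) 1"
      using S(3)[OF x] pd by (rule gcong_dvd_modulus)
    then have "gcong p (gauss_of_pair y ^ m) 1"
      using gcong_power[OF y_x] by (rule gcong_trans[rotated])
    ultimately show "y \<in> T"
      using y carrier_G_iff[OF \<open>p \<ge> 1\<close>] by (simp add: T_def)
  qed
  moreover have "inj_on reduce S"
  proof (rule inj_onI)
    fix x x' assume x: "x \<in> S" and x': "x' \<in> S" and "reduce x = reduce x'"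
    then have "gauss_mod p (gauss_of_pair x) = gauss_mod p (gauss_of_pair x')"
      unfolding reduce_def by (metis gauss_of_pair_of_gauss)
    then have "gcong p (gauss_of_pair x) (gauss_of_pair x')"
      by (simp add: gauss_mod_eq_iff)
    then have "gcong (int p ^ r) (gauss_of_pair x) (gauss_of_pair x')"
      by (rule gcong_prime_power_if_gcong_prime[OF p r m S(3)[OF x] S(3)[OF x'] S(2)[OF x']])
    then have "gauss_mod (int p ^ r) (gauss_of_pair x) = gauss_mod (int p ^ r) (gauss_of_pair x')"
      by (simp add: gauss_mod_eq_iff)
    then show "x = x'"
      using S(1)[OF x] S(1)[OF x'] inj_gauss_of_pair by (simp add: inj_eq)
  qed
  moreover have "finite T"
    using finite_carrier_G by (simp add: T_def)
  ultimately have "card S \<le> card T"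
    using card_inj_on_le by blast
  then show ?thesis
    by (simp add: S_def T_def pow_G_eq_one_iff)
qed

section \<open>Roots of unity in \<open>G p\<close>\<close>

lemma QuadRes_minus_one_iff:
  assumes "prime p" "odd p"
  shows "QuadRes (int p) (-1) \<longleftrightarrow> p mod 4 = 1"
proof -
  have "p > 2"
    using odd_prime_ge_3[OF assms] by simp
  then have p: "int p > 2"
    by simp
  have not_zero: "\<not> [-1 = 0] (mod int p)"
    using p by (auto simp: cong_iff_dvd_diff dest: zdvd_imp_le)
  have "[Legendre (-1) (int p) = (-1) ^ ((p - 1) div 2)] (mod int p)"
    using euler_criterion[OF assms(1) \<open>p > 2\<close>] by simp
  moreover have "Legendre (-1) (int p) \<in> {1, -1}" "(-1 :: int) ^ ((p - 1) div 2) \<in> {1, -1}"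
    using not_zero by (auto simp: Legendre_def minus_one_power_iff)
  ultimately have "Legendre (-1) (int p) = (-1) ^ ((p - 1) div 2)"
    using not_cong_one_minus_one[OF p] by (auto simp: cong_sym)
  then have "QuadRes (int p) (-1) \<longleftrightarrow> even ((p - 1) div 2)"
    using not_zero by (auto simp: Legendre_def minus_one_power_iff split: if_splits)
  also have "\<dots> \<longleftrightarrow> p mod 4 = 1"
    using assms(2) by presburger
  finally show ?thesis .
qed

definition gauss_eval :: "int \<Rightarrow> gauss_int \<Rightarrow> int" where
  "gauss_eval s z = re z + s * im z"

lemma gauss_eval_mult_cong:
  assumes "[s^2 = -1] (mod n)"
  shows "[gauss_eval s (z * w) = gauss_eval s z * gauss_eval s w] (mod n)"
proof -
  have "[gauss_eval s (z * w) + (s^2 + 1) * (im z * im w) = gauss_eval s (z * w) + 0 * (im z * im w)] (mod n)"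
    using assms by (intro cong_add cong_mult) (auto simp: cong_iff_dvd_diff)
  then show ?thesis
    by (simp add: gauss_eval_def algebra_simps power2_eq_square cong_sym_eq)
qed

lemma gauss_eval_power_cong:
  assumes "[s^2 = -1] (mod n)"
  shows "[gauss_eval s (z ^ k) = gauss_eval s z ^ k] (mod n)"
proof (induction k)
  case (Suc k)
  have "[gauss_eval s (z * z ^ k) = gauss_eval s z * gauss_eval s (z ^ k)] (mod n)"
    by (rule gauss_eval_mult_cong[OF assms])
  also have "[gauss_eval s z * gauss_eval s (z ^ k) = gauss_eval s z * gauss_eval s z ^ k] (mod n)"
    using Suc.IH by (rule cong_scalar_left)
  finally show ?case
    by simp
qed (simp add: gauss_eval_def)

lemma gauss_eval_gconj_cong:
  assumes "[s^2 = -1] (mod n)"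
  shows "[gauss_eval s z * gauss_eval s (gconj z) = gnorm z] (mod n)"
proof -
  have "[re z ^ 2 - s^2 * im z ^ 2 = re z ^ 2 - (-1) * im z ^ 2] (mod n)"
    using assms by (intro cong_diff cong_mult) auto
  then show ?thesis
    by (simp add: gauss_eval_def gnorm_def algebra_simps power2_eq_square)
qed

lemma gauss_eval_root_of_unity:
  assumes s: "[s^2 = -1] (mod n)" and z: "gcong n (z ^ m) 1"
  shows "[gauss_eval s z ^ m = 1] (mod n)"
proof -
  have "[gauss_eval s z ^ m = gauss_eval s (z ^ m)] (mod n)"
    using gauss_eval_power_cong[OF s] by (rule cong_sym)
  also have "[gauss_eval s (z ^ m) = 1 + s * 0] (mod n)"
    using z unfolding gauss_eval_def gcong_iff by (intro cong_add cong_scalar_left) simp_all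
  finally show ?thesis
    by simp
qed

text \<open>On norm-\<open>1\<close> residues the value at \<open>gconj z\<close> is the inverse of the value at \<open>z\<close>, and
  \<open>2 re z\<close>, \<open>2 s im z\<close> are the sum and the difference of the two.\<close>
lemma gcong_if_gauss_eval_cong:
  assumes p: "prime p" "odd p" and s: "[s^2 = -1] (mod int p)"
    and norm: "[gnorm z = 1] (mod int p)" "[gnorm w = 1] (mod int p)"
    and eval: "[gauss_eval s z = gauss_eval s w] (mod int p)"
  shows "gcong p z w"
proof -
  let ?e = "gauss_eval s" and ?P = "int p"
  have "[?e (gconj z) = ?e (gconj z) * (?e w * ?e (gconj w))] (mod ?P)"
    using cong_scalar_left[OF cong_trans[OF gauss_eval_gconj_cong[OF s] norm(2)]] by (simp add: cong_sym)
  also have "[?e (gconj z) * (?e w * ?e (gconj w)) = ?e (gconj z) * (?e z * ?e (gconj w))] (mod ?P)"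
    using eval by (intro cong_mult cong_refl) (simp add: cong_sym)
  also have "?e (gconj z) * (?e z * ?e (gconj w)) = (?e z * ?e (gconj z)) * ?e (gconj w)"
    by (simp add: ac_simps)
  also have "[\<dots> = 1 * ?e (gconj w)] (mod ?P)"
    using cong_trans[OF gauss_eval_gconj_cong[OF s] norm(1)] by (rule cong_scalar_right)
  finally have eval_gconj: "[?e (gconj z) = ?e (gconj w)] (mod ?P)"
    by simp
  have "coprime 2 ?P"
    using p(2) by simp
  moreover have "[s * - s = 1] (mod ?P)"
    using cong_minus_minus_iff s by (fastforce simp: power2_eq_square)
  then have "coprime s ?P"
    using coprime_iff_invertible_int by blast
  ultimately have coprime: "coprime 2 ?P" "coprime (2 * s) ?P"
    by simp_all
  have "2 * re z = ?e z + ?e (gconj z)" "2 * re w = ?e w + ?e (gconj w)"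
    "(2 * s) * im z = ?e z - ?e (gconj z)" "(2 * s) * im w = ?e w - ?e (gconj w)"
    by (simp_all add: gauss_eval_def algebra_simps)
  then have "[2 * re z = 2 * re w] (mod ?P)" "[(2 * s) * im z = (2 * s) * im w] (mod ?P)"
    using eval eval_gconj by (simp_all add: cong_add cong_diff)
  then show ?thesis
    using coprime by (simp add: gcong_iff cong_mult_lcancel)
qed

lemma card_roots_G_prime_1mod4_le:
  assumes p: "prime p" "p mod 4 = 1" and m: "m > 0"
  shows "card {y \<in> carrier (G p). y [^]\<^bsub>G p\<^esub> m = \<one>\<^bsub>G p\<^esub>} \<le> m"
proof -
  have "odd p"
    using p(2) by presburger
  then obtain s where s: "[s^2 = -1] (mod int p)"
    using QuadRes_minus_one_iff[OF p(1)] p(2) by (auto simp: QuadRes_def)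
  have "p \<ge> 1"
    using prime_gt_0_nat[OF p(1)] by simp
  note carrier = carrier_G_iff[OF this]
  define T where "T = {y \<in> carrier (G p). gcong p (gauss_of_pair y ^ m) 1}"
  define h where "h y = nat (gauss_eval s (gauss_of_pair y) mod int p)" for y
  have int_h: "int (h y) = gauss_eval s (gauss_of_pair y) mod int p" for y
    using \<open>p \<ge> 1\<close> by (simp add: h_def)
  have "h ` T \<subseteq> {x \<in> {..<p}. [x ^ m = 1] (mod p)}"
  proof
    fix x assume "x \<in> h ` T"
    then obtain y where "y \<in> T" and x: "x = h y"
      by blast
    then have "[gauss_eval s (gauss_of_pair y) ^ m = 1] (mod int p)"
      by (intro gauss_eval_root_of_unity[OF s]) (simp add: T_def)
    moreover have "[int (h y) = gauss_eval s (gauss_of_pair y)] (mod int p)"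
      by (simp add: int_h cong_def)
    ultimately have "[int (h y) ^ m = 1] (mod int p)"
      using cong_pow cong_trans by blast
    then have "[h y ^ m = 1] (mod p)"
      by (metis cong_int_iff of_nat_1 of_nat_power)
    moreover have "int (h y) < int p"
      using int_h[of y] \<open>p \<ge> 1\<close> by simp
    then have "h y < p"
      by simp
    ultimately show "x \<in> {x \<in> {..<p}. [x ^ m = 1] (mod p)}"
      by (simp add: x)
  qed
  moreover have "inj_on h T"
  proof (rule inj_onI)
    fix y y' assume y: "y \<in> T" and y': "y' \<in> T" and "h y = h y'"
    then have "[gauss_eval s (gauss_of_pair y) = gauss_eval s (gauss_of_pair y')] (mod int p)"
      using int_h by (metis cong_def)
    then have "gcong p (gauss_of_pair y) (gauss_of_pair y')"
      using y y' carrier by (intro gcong_if_gauss_eval_cong[OF p(1) \<open>odd p\<close> s]) (auto simp: T_def)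
    then show "y = y'"
      using y y' carrier inj_gauss_of_pair by (simp add: T_def inj_eq flip: gauss_mod_eq_iff)
  qed
  ultimately have "card T \<le> card {x \<in> {..<p}. [x ^ m = 1] (mod p)}"
    by (intro card_inj_on_le) auto
  also have "\<dots> \<le> m"
    by (rule roots_mod_prime_bound[OF p(1) m])
  finally show ?thesis
    by (simp add: T_def pow_G_eq_one_iff)
qed

lemma prime_3mod4_dvd_gnorm:
  assumes p: "prime p" "p mod 4 = 3" and d: "int p dvd gnorm z"
  shows "int p dvd re z \<and> int p dvd im z"
proof -
  have "odd p"
    using p(2) by presburger
  have prime: "prime (int p)"
    using p(1) by simp
  have im: "int p dvd im z"
  proof (rule ccontr)
    assume "\<not> int p dvd im z"
    then have "coprime (im z) (int p)"
      using prime by (simp add: prime_imp_coprime coprime_commute)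
    then obtain c where c: "[im z * c = 1] (mod int p)"
      using cong_solve_coprime_int by blast
    have "[(re z * c) ^ 2 + (im z * c) ^ 2 = 0] (mod int p)"
      using d by (simp add: cong_0_iff gnorm_def power_mult_distrib flip: distrib_right)
    moreover have "[(im z * c) ^ 2 = 1] (mod int p)"
      using cong_pow[OF c, of 2] by simp
    ultimately have "[(re z * c) ^ 2 + (im z * c) ^ 2 - (im z * c) ^ 2 = 0 - 1] (mod int p)"
      by (rule cong_diff)
    then have "[(re z * c) ^ 2 = -1] (mod int p)"
      by simp
    then show False
      using QuadRes_minus_one_iff[OF p(1) \<open>odd p\<close>] p(2) by (auto simp: QuadRes_def)
  qed
  moreover have "int p dvd re z ^ 2"
    using d dvd_mult2[OF im, of "im z"] by (simp add: gnorm_def dvd_add_left_iff power2_eq_square)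
  ultimately show ?thesis
    using prime prime_dvd_power by blast
qed

definition gauss_residue_ring :: "nat \<Rightarrow> gauss_int ring" where
  "gauss_residue_ring p = \<lparr>carrier = {z. gauss_mod (int p) z = z}, mult = (\<lambda>z w. gauss_mod (int p) (z * w)),
     one = 1, zero = 0, add = (\<lambda>z w. gauss_mod (int p) (z + w))\<rparr>"

lemma gauss_residue_ring_simps:
  "carrier (gauss_residue_ring p) = {z. gauss_mod (int p) z = z}"
  "z \<otimes>\<^bsub>gauss_residue_ring p\<^esub> w = gauss_mod (int p) (z * w)"
  "z \<oplus>\<^bsub>gauss_residue_ring p\<^esub> w = gauss_mod (int p) (z + w)"
  "\<one>\<^bsub>gauss_residue_ring p\<^esub> = 1" "\<zero>\<^bsub>gauss_residue_ring p\<^esub> = 0"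
  by (simp_all add: gauss_residue_ring_def)

lemma pow_gauss_residue_ring:
  "p \<ge> 2 \<Longrightarrow> z [^]\<^bsub>gauss_residue_ring p\<^esub> (k::nat) = gauss_mod (int p) (z ^ k)"
  by (induction k) (simp_all add: gauss_residue_ring_simps gauss_mod_one gauss_mod_mult_gauss_mod mult.commute)

lemma finite_carrier_gauss_residue_ring:
  assumes "p > 0"
  shows "finite (carrier (gauss_residue_ring p))"
proof (rule finite_subset)
  show "carrier (gauss_residue_ring p) \<subseteq> gauss_of_pair ` ({0..<int p} \<times> {0..<int p})"
  proof
    fix z assume "z \<in> carrier (gauss_residue_ring p)"
    then have "re z = re z mod int p" "im z = im z mod int p"
      by (simp_all add: gauss_residue_ring_simps gauss_int_eq_iff)
    then have "pair_of_gauss z \<in> {0..<int p} \<times> {0..<int p}"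
      using assms by (simp add: pair_of_gauss_def) (metis pos_mod_sign pos_mod_bound of_nat_0_less_iff)
    then show "z \<in> gauss_of_pair ` ({0..<int p} \<times> {0..<int p})"
      by (rule rev_image_eqI) simp
  qed
qed simp

lemma cring_gauss_residue_ring:
  assumes "p \<ge> 2"
  shows "cring (gauss_residue_ring p)"
proof (rule cringI)
  show "abelian_group (gauss_residue_ring p)"
  proof (rule abelian_groupI)
    fix x assume "x \<in> carrier (gauss_residue_ring p)"
    then show "\<exists>y\<in>carrier (gauss_residue_ring p). y \<oplus>\<^bsub>gauss_residue_ring p\<^esub> x = \<zero>\<^bsub>gauss_residue_ring p\<^esub>"
      by (intro bexI[of _ "gauss_mod (int p) (- x)"]) (simp_all add: gauss_residue_ring_simps gauss_mod_add_gauss_mod)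
  qed (simp_all add: gauss_residue_ring_simps gauss_mod_add_gauss_mod add_ac)
  show "comm_monoid (gauss_residue_ring p)"
    by (rule comm_monoidI)
      (use assms in \<open>simp_all add: gauss_residue_ring_simps gauss_mod_one gauss_mod_mult_gauss_mod mult_ac\<close>)
qed (simp add: gauss_residue_ring_simps gauss_mod_mult_gauss_mod gauss_mod_add_gauss_mod algebra_simps)

text \<open>For \<open>p \<equiv> 3 (mod 4)\<close>, \<open>p\<close> stays prime in \<open>\<int>[i]\<close>, since \<open>p | N(z)\<close> forces \<open>p | z\<close>.\<close>
lemma domain_gauss_residue_ring:
  assumes p: "prime p" "p mod 4 = 3"
  shows "domain (gauss_residue_ring p)"
proof -
  have "p \<ge> 2"
    using prime_ge_2_nat[OF p(1)] .
  have zero: "z = 0" if "int p dvd gnorm z" "z \<in> carrier (gauss_residue_ring p)" for z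
  proof -
    have "gauss_mod (int p) z = 0"
      using prime_3mod4_dvd_gnorm[OF p that(1)] by (simp add: gauss_int_eq_iff)
    then show ?thesis
      using that(2) by (simp add: gauss_residue_ring_simps)
  qed
  show ?thesis
  proof (rule domain.intro[OF cring_gauss_residue_ring[OF \<open>p \<ge> 2\<close>]], rule domain_axioms.intro)
    show "\<one>\<^bsub>gauss_residue_ring p\<^esub> \<noteq> \<zero>\<^bsub>gauss_residue_ring p\<^esub>"
      by (simp add: gauss_residue_ring_simps)
  next
    fix z w assume zw: "z \<otimes>\<^bsub>gauss_residue_ring p\<^esub> w = \<zero>\<^bsub>gauss_residue_ring p\<^esub>"
      "z \<in> carrier (gauss_residue_ring p)" "w \<in> carrier (gauss_residue_ring p)"
    then have "gcong p (z * w) 0"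
      by (simp add: gauss_residue_ring_simps flip: gauss_mod_eq_iff)
    then have "[gnorm (z * w) = gnorm 0] (mod int p)"
      by (rule gcong_gnorm)
    then have "int p dvd gnorm z * gnorm w"
      by (simp add: gnorm_mult cong_0_iff)
    then have "int p dvd gnorm z \<or> int p dvd gnorm w"
      using p(1) by (simp add: prime_dvd_mult_iff)
    then show "z = \<zero>\<^bsub>gauss_residue_ring p\<^esub> \<or> w = \<zero>\<^bsub>gauss_residue_ring p\<^esub>"
      using zero zw by (auto simp: gauss_residue_ring_simps)
  qed
qed

lemma card_roots_G_prime_3mod4_le:
  assumes p: "prime p" "p mod 4 = 3" and m: "m > 0"
  shows "card {y \<in> carrier (G p). y [^]\<^bsub>G p\<^esub> m = \<one>\<^bsub>G p\<^esub>} \<le> m"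
proof -
  let ?R = "gauss_residue_ring p"
  interpret R: domain ?R
    by (rule domain_gauss_residue_ring[OF p])
  have "p \<ge> 2"
    using prime_ge_2_nat[OF p(1)] .
  define T where "T = {y \<in> carrier (G p). gcong p (gauss_of_pair y ^ m) 1}"
  have "gauss_of_pair ` T \<subseteq> {z \<in> carrier ?R. z [^]\<^bsub>?R\<^esub> m = \<one>\<^bsub>?R\<^esub>}"
    using carrier_G_iff[of p] \<open>p \<ge> 2\<close>
    by (auto simp: T_def gauss_residue_ring_simps pow_gauss_residue_ring gauss_mod_one
        simp flip: gauss_mod_eq_iff)
  then have "card (gauss_of_pair ` T) \<le> card {z \<in> carrier ?R. z [^]\<^bsub>?R\<^esub> m = \<one>\<^bsub>?R\<^esub>}"
    using finite_carrier_gauss_residue_ring \<open>p \<ge> 2\<close> by (intro card_mono) auto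
  also have "\<dots> \<le> m"
    using R.num_roots_le_deg[OF finite_carrier_gauss_residue_ring] m \<open>p \<ge> 2\<close> by simp
  finally show ?thesis
    using card_image[OF inj_on_subset[OF inj_gauss_of_pair]] by (simp add: T_def pow_G_eq_one_iff)
qed

lemma card_roots_G_prime_le:
  assumes "prime p" "odd p" "m > 0"
  shows "card {y \<in> carrier (G p). y [^]\<^bsub>G p\<^esub> m = \<one>\<^bsub>G p\<^esub>} \<le> m"
proof -
  have "p mod 4 = 1 \<or> p mod 4 = 3"
    using assms(2) by presburger
  then show ?thesis
    using card_roots_G_prime_1mod4_le card_roots_G_prime_3mod4_le assms by blast
qed

lemma card_roots_G_prime_power_le:
  assumes p: "prime p" "odd p" and r: "r \<ge> 1" and d: "d > 0"
  shows "card {x \<in> carrier (G (p ^ r)). x [^]\<^bsub>G (p ^ r)\<^esub> d = \<one>\<^bsub>G (p ^ r)\<^esub>} \<le> d"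
proof -
  have "p ^ r \<ge> 2"
    using prime_power_ge_2[OF p(1)] r by simp
  then interpret comm_group "G (p ^ r)"
    by (rule comm_group_G)
  define s where "s = multiplicity p d"
  define m where "m = d div p ^ s"
  have d_eq: "d = p ^ s * m"
    using multiplicity_dvd[of p d] by (simp add: s_def m_def)
  have "\<not> p dvd m"
    unfolding m_def s_def using d p(1) not_prime_unit by (intro multiplicity_decompose) auto
  then have "coprime m p"
    using prime_imp_coprime[OF p(1)] by (simp add: coprime_commute)
  have "m > 0"
    using d d_eq by (cases m) auto
  have "card {x \<in> carrier (G (p ^ r)). x [^]\<^bsub>G (p ^ r)\<^esub> d = \<one>\<^bsub>G (p ^ r)\<^esub>}
      \<le> card {x \<in> carrier (G (p ^ r)). x [^]\<^bsub>G (p ^ r)\<^esub> (p ^ s) = \<one>\<^bsub>G (p ^ r)\<^esub>}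
        * card {x \<in> carrier (G (p ^ r)). x [^]\<^bsub>G (p ^ r)\<^esub> m = \<one>\<^bsub>G (p ^ r)\<^esub>}"
    unfolding d_eq using \<open>coprime m p\<close> by (intro card_roots_mult_le finite_carrier_G) (simp add: coprime_commute)
  also have "\<dots> \<le> p ^ s * m"
  proof (rule mult_le_mono)
    show "card {x \<in> carrier (G (p ^ r)). x [^]\<^bsub>G (p ^ r)\<^esub> (p ^ s) = \<one>\<^bsub>G (p ^ r)\<^esub>} \<le> p ^ s"
      by (rule card_roots_G_prime_power_p_part_le[OF p r])
    show "card {x \<in> carrier (G (p ^ r)). x [^]\<^bsub>G (p ^ r)\<^esub> m = \<one>\<^bsub>G (p ^ r)\<^esub>} \<le> m"
      using card_roots_G_prime_power_le_card_roots_G_prime[OF p r \<open>coprime m p\<close>]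
        card_roots_G_prime_le[OF p \<open>m > 0\<close>] by linarith
  qed
  finally show ?thesis
    using d_eq by simp
qed

lemma Phi_eq_Lambda_odd_prime_power:
  assumes "prime p" "odd p" "r > 0"
  shows "Phi (p ^ r) = Lambda (p ^ r)"
proof -
  have "p ^ r \<ge> 2"
    using prime_power_ge_2[OF assms(1,3)] .
  then interpret comm_group "G (p ^ r)"
    by (rule comm_group_G)
  show ?thesis
    unfolding Phi_eq_order Lambda_eq_exponent
    using assms card_roots_G_prime_power_le
    by (intro exponent_eq_order_if_card_roots_le[symmetric] finite_carrier_G) auto
qed

lemma carrier_G_2: "carrier (G 2) = {(1, 0), (0, 1)}"
proof
  show "carrier (G 2) \<subseteq> {(1, 0), (0, 1)}"
  proof
    fix x assume "x \<in> carrier (G 2)"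
    then have "fst x \<in> {0, 1}" "snd x \<in> {0, 1}" "[fst x ^ 2 + snd x ^ 2 = 1] (mod 2)"
      by (auto simp: mem_carrier_G)
    then show "x \<in> {(1, 0), (0, 1)}"
      by (cases x) (auto simp: cong_def)
  qed
  show "{(1, 0), (0, 1)} \<subseteq> carrier (G 2)"
    by (simp add: mem_carrier_G cong_def)
qed

lemma Phi_eq_Lambda_2: "Phi 2 = Lambda 2"
proof -
  interpret comm_group "G 2"
    by (rule comm_group_G) simp
  have "(0, 1) \<noteq> \<one>\<^bsub>G 2\<^esub>"
    by (simp add: one_G pair_of_gauss_def)
  then have "exponent (G 2) \<noteq> 1"
    using pow_exponent_eq_one[OF finite_carrier_G, of "(0, 1)"] carrier_G_2 by auto
  moreover have "exponent (G 2) \<le> 2" "exponent (G 2) > 0"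
    using exponent_le_order exponent_pos finite_carrier_G carrier_G_2 by (auto simp: order_def)
  ultimately show ?thesis
    using carrier_G_2 by (simp add: Phi_eq_order order_def Lambda_eq_exponent)
qed

theorem mainTheorem7:
  fixes n :: nat
  assumes "n \<ge> 2"
  shows "Phi n = Lambda n \<longleftrightarrow> (n = 2 \<or> (\<exists>p r. prime p \<and> odd p \<and> r > 0 \<and> n = p ^ r))"
proof
  assume "Phi n = Lambda n"
  then show "n = 2 \<or> (\<exists>p r. prime p \<and> odd p \<and> r > 0 \<and> n = p ^ r)"
    using Lambda_less_Phi_if_not_odd_prime_power[OF assms] by (metis less_irrefl)
next
  assume "n = 2 \<or> (\<exists>p r. prime p \<and> odd p \<and> r > 0 \<and> n = p ^ r)"
  then show "Phi n = Lambda n"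
    using Phi_eq_Lambda_2 Phi_eq_Lambda_odd_prime_power by blast
qed

end
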